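(* Let $\mathcal{G}$ be a simple undirected graph on $N$ vertices with no isolated vertices, with adjacency matrix $\mathbf{A}\in\{0,1\}^{N\times N}$ and degree matrix $\mathbf{D}=\operatorname{diag}(\mathbf{A}\mathbf{1})$. Let $\lambda$ be an eigenvalue of $$\mathbf{L}=\mathbf{D}^{-1/2}\mathbf{A}\mathbf{D}^{-1/2}-\operatorname{diag}\big(\mathbf{D}^{-1/2}\mathbf{A}\mathbf{D}^{-1/2}\mathbf{1}\big).$$ Then $|\lambda|\le 2\sqrt{N}$.
   Context: For a vector $\mathbf{w}$, $\operatorname{diag}(\mathbf{w})$ is the diagonal matrix with diagonal $\mathbf{w}$; $\mathbf{1}$ is the all-ones vector. *)

theory Defs
  imports "HOL-Analysis.Analysis"
begin

text \<open>Simple undirected graph given by its adjacency matrix on vertex type 'n (N = CARD('n)).\<close>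
definition simple_adj :: "real^'n^'n \<Rightarrow> bool" where
  "simple_adj A \<longleftrightarrow> (\<forall>i j. A$i$j \<in> {0,1}) \<and> (\<forall>i j. A$i$j = A$j$i) \<and> (\<forall>i. A$i$i = 0)"

definition no_isolated :: "real^'n^'n \<Rightarrow> bool" where
  "no_isolated A \<longleftrightarrow> (\<forall>i. \<exists>j. A$i$j = 1)"

definition diag_mat :: "real^'n \<Rightarrow> real^'n^'n" where
  "diag_mat w = (\<chi> i j. if i = j then w$i else 0)"

definition degree_mat :: "real^'n^'n \<Rightarrow> real^'n^'n" where
  "degree_mat A = diag_mat (A *v (\<chi> i. 1))"

definition inv_sqrt_diag :: "real^'n^'n \<Rightarrow> real^'n^'n" where
  "inv_sqrt_diag D = diag_mat (\<chi> i. 1 / sqrt (D$i$i))"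

definition normalized_adj :: "real^'n^'n \<Rightarrow> real^'n^'n" where
  "normalized_adj A = inv_sqrt_diag (degree_mat A) ** A ** inv_sqrt_diag (degree_mat A)"

definition L_mat :: "real^'n^'n \<Rightarrow> real^'n^'n" where
  "L_mat A = normalized_adj A - diag_mat (normalized_adj A *v (\<chi> i. 1))"

definition is_eigenvalue :: "real^'n^'n \<Rightarrow> complex \<Rightarrow> bool" where
  "is_eigenvalue M l \<longleftrightarrow> (\<exists>v :: complex^'n. v \<noteq> 0 \<and>
      (\<chi> i. \<Sum>j\<in>UNIV. complex_of_real (M$i$j) * v$j) = l *s v)"

end

theory Submission
  imports Defs
begin

text \<open>
  By Gershgorin's theorem every eigenvalue is bounded by the largest absolute row sum.
  Writing \<open>N\<close> for the normalized adjacency matrix (nonnegative entries) and \<open>d\<^sub>i\<close> for the degrees,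
  row \<open>i\<close> of \<open>L = N - diag(N 1)\<close> has absolute sum at most \<open>2 \<Sum>\<^sub>k N\<^sub>i\<^sub>k\<close>.
  Every neighbour \<open>k\<close> of \<open>i\<close> has \<open>d\<^sub>k \<ge> 1\<close>, so \<open>\<Sum>\<^sub>k N\<^sub>i\<^sub>k \<le> d\<^sub>i / sqrt d\<^sub>i = sqrt d\<^sub>i \<le> sqrt N\<close>.
\<close>

lemma finite_type_has_maximizer:
  fixes f :: "'a::finite \<Rightarrow> 'b::linorder"
  obtains i where "\<And>j. f j \<le> f i"
proof -
  have "Max (range f) \<in> range f" by (rule Max_in) auto
  then obtain i where "f i = Max (range f)" by (metis imageE)
  moreover have "f j \<le> Max (range f)" for j by (rule Max_ge) auto
  ultimately show ?thesis using that by metis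
qed

lemma eigenvalue_cmod_le_max_row_sum:
  fixes M :: "real^'n^'n" and l :: complex
  assumes "is_eigenvalue M l" and row_sum: "\<And>i. (\<Sum>j\<in>UNIV. \<bar>M$i$j\<bar>) \<le> B"
  shows "cmod l \<le> B"
proof -
  obtain v :: "complex^'n" where "v \<noteq> 0"
    and ev: "(\<chi> i. \<Sum>j\<in>UNIV. complex_of_real (M$i$j) * v$j) = l *s v"
    using assms(1) unfolding is_eigenvalue_def by blast
  obtain i where max: "\<And>j. cmod (v$j) \<le> cmod (v$i)"
    using finite_type_has_maximizer[of "\<lambda>j. cmod (v$j)"] by blast
  have "cmod (v$i) > 0"
  proof (rule ccontr)
    assume "\<not> cmod (v$i) > 0"
    then have "v$j = 0" for j using max[of j] by simp
    with \<open>v \<noteq> 0\<close> show False by (simp add: vec_eq_iff)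
  qed
  have "cmod l * cmod (v$i) = cmod (\<Sum>j\<in>UNIV. complex_of_real (M$i$j) * v$j)"
    using arg_cong[OF ev, of "\<lambda>w. w$i"] by (simp add: norm_mult)
  also have "\<dots> \<le> (\<Sum>j\<in>UNIV. \<bar>M$i$j\<bar> * cmod (v$i))"
    by (rule order_trans[OF norm_sum sum_mono]) (simp add: norm_mult max mult_left_mono)
  also have "\<dots> = (\<Sum>j\<in>UNIV. \<bar>M$i$j\<bar>) * cmod (v$i)"
    by (simp add: sum_distrib_right)
  also have "\<dots> \<le> B * cmod (v$i)"
    using row_sum \<open>cmod (v$i) > 0\<close> by (simp add: mult_right_mono)
  finally show ?thesis using \<open>cmod (v$i) > 0\<close> by simp
qed

lemma diag_mat_matrix_mult_nth: "(diag_mat w ** M) $ i $ j = w$i * M$i$j"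
  by (simp add: matrix_matrix_mult_def diag_mat_def if_distrib if_distribR cong: if_cong)

lemma matrix_mult_diag_mat_nth: "(M ** diag_mat w) $ i $ j = M$i$j * w$j"
  by (simp add: matrix_matrix_mult_def diag_mat_def if_distrib cong: if_cong)

lemma degree_mat_diagonal: "degree_mat A $ i $ i = (\<Sum>k\<in>UNIV. A$i$k)"
  by (simp add: degree_mat_def diag_mat_def matrix_vector_mult_def)

lemma normalized_adj_nth:
  "normalized_adj A $ i $ j = A$i$j / (sqrt (\<Sum>k\<in>UNIV. A$i$k) * sqrt (\<Sum>k\<in>UNIV. A$j$k))"
  unfolding normalized_adj_def inv_sqrt_diag_def
  by (simp add: matrix_mult_diag_mat_nth diag_mat_matrix_mult_nth degree_mat_diagonal)

lemma row_sum_abs_sub_diag_row_sum_le: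
  fixes M :: "real^'n^'n"
  assumes nonneg: "\<And>j. M$i$j \<ge> 0"
  shows "(\<Sum>j\<in>UNIV. \<bar>(M - diag_mat (M *v (\<chi> k. 1)))$i$j\<bar>) \<le> 2 * (\<Sum>j\<in>UNIV. M$i$j)"
proof -
  let ?s = "\<Sum>k\<in>UNIV. M$i$k"
  have "?s \<ge> 0" using nonneg by (simp add: sum_nonneg)
  have "(\<Sum>j\<in>UNIV. \<bar>(M - diag_mat (M *v (\<chi> k. 1)))$i$j\<bar>)
      \<le> (\<Sum>j\<in>UNIV. M$i$j + (if i = j then ?s else 0))"
  proof (rule sum_mono)
    fix j
    show "\<bar>(M - diag_mat (M *v (\<chi> k. 1)))$i$j\<bar> \<le> M$i$j + (if i = j then ?s else 0)"
      using nonneg[of j] \<open>?s \<ge> 0\<close>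
      by (cases "j = i") (simp_all add: diag_mat_def matrix_vector_mult_def)
  qed
  also have "\<dots> = 2 * ?s" by (simp add: sum.distrib)
  finally show ?thesis .
qed

context
  fixes A :: "real^'n^'n"
  assumes simple: "simple_adj A"
begin

lemma adj_nth_cases: "A$i$j = 0 \<or> A$i$j = 1"
  using simple unfolding simple_adj_def by auto

lemma adj_nth_nonneg: "A$i$j \<ge> 0"
  using adj_nth_cases[of i j] by auto

lemma adj_degree_nonneg: "(\<Sum>k\<in>UNIV. A$i$k) \<ge> 0"
  by (intro sum_nonneg adj_nth_nonneg)

lemma adj_degree_le_card: "(\<Sum>k\<in>UNIV. A$i$k) \<le> real CARD('n)"
proof -
  have "(\<Sum>k\<in>UNIV. A$i$k) \<le> (\<Sum>k\<in>(UNIV::'n set). 1)"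
    using adj_nth_cases by (intro sum_mono) (metis order_refl zero_le_one)
  then show ?thesis by simp
qed

lemma adj_degree_ge_one_if_adjacent:
  assumes "A$i$k = 1"
  shows "(\<Sum>j\<in>UNIV. A$k$j) \<ge> 1"
proof -
  have "A$k$i = 1" using assms simple unfolding simple_adj_def by metis
  moreover have "A$k$i \<le> (\<Sum>j\<in>UNIV. A$k$j)"
    by (intro member_le_sum adj_nth_nonneg) simp_all
  ultimately show ?thesis by simp
qed

lemma normalized_adj_nonneg: "normalized_adj A $ i $ j \<ge> 0"
  unfolding normalized_adj_nth
  by (intro divide_nonneg_nonneg mult_nonneg_nonneg adj_nth_nonneg real_sqrt_ge_zero adj_degree_nonneg)

lemma normalized_adj_row_sum_le_sqrt_degree:
  "(\<Sum>k\<in>UNIV. normalized_adj A $ i $ k) \<le> sqrt (\<Sum>k\<in>UNIV. A$i$k)"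
proof -
  let ?d = "\<lambda>i. \<Sum>k\<in>UNIV. A$i$k"
  have "normalized_adj A $ i $ k \<le> A$i$k / sqrt (?d i)" for k
  proof (cases "A$i$k = 0 \<or> ?d i = 0")
    case True
    then show ?thesis by (auto simp: normalized_adj_nth)
  next
    case False
    then have "A$i$k = 1" using adj_nth_cases by blast
    then have "?d k \<ge> 1" by (rule adj_degree_ge_one_if_adjacent)
    moreover have "?d i > 0" using False adj_degree_nonneg[of i] by simp
    ultimately have "sqrt (?d i) \<le> sqrt (?d i) * sqrt (?d k)"
      and "0 < sqrt (?d i) * sqrt (?d k) * sqrt (?d i)"
      by simp_all
    then show ?thesis
      unfolding normalized_adj_nth by (rule divide_left_mono[OF _ adj_nth_nonneg])
  qed
  then have "(\<Sum>k\<in>UNIV. normalized_adj A $ i $ k) \<le> (\<Sum>k\<in>UNIV. A$i$k / sqrt (?d i))"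
    by (rule sum_mono)
  also have "\<dots> = ?d i / sqrt (?d i)" by (simp add: sum_divide_distrib)
  also have "\<dots> = sqrt (?d i)" by (rule real_div_sqrt[OF adj_degree_nonneg])
  finally show ?thesis .
qed

end

theorem proposition8:
  fixes A :: "real^'n^'n" and l :: complex
  assumes "simple_adj A"
    and "no_isolated A"
    and "is_eigenvalue (L_mat A) l"
  shows "cmod l \<le> 2 * sqrt (real CARD('n))"
proof (rule eigenvalue_cmod_le_max_row_sum[OF assms(3)])
  fix i
  have "(\<Sum>j\<in>UNIV. \<bar>L_mat A $ i $ j\<bar>) \<le> 2 * (\<Sum>j\<in>UNIV. normalized_adj A $ i $ j)"
    unfolding L_mat_def
    by (rule row_sum_abs_sub_diag_row_sum_le[OF normalized_adj_nonneg[OF assms(1)]])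
  also have "\<dots> \<le> 2 * sqrt (\<Sum>k\<in>UNIV. A$i$k)"
    using normalized_adj_row_sum_le_sqrt_degree[OF assms(1)] by simp
  also have "\<dots> \<le> 2 * sqrt (real CARD('n))"
    using adj_degree_le_card[OF assms(1)] by simp
  finally show "(\<Sum>j\<in>UNIV. \<bar>L_mat A $ i $ j\<bar>) \<le> 2 * sqrt (real CARD('n))" .
qed

end
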